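(* Let $n\ge2$, let $P$ be a partial $n$-Metric on a set $X$, let $x_o\in X$ and let $f:X\to X$. Suppose there are real numbers $r$ and $0<c<1$ such that for every natural number $i$, $$r\le P(\langle f^{i+1}(x_o)\rangle^n)\quad\text{and}\quad P(\langle f^i(x_o)\rangle^{n-1},f^{i+1}(x_o))\le r+c^i\,\big|P(\langle x_o\rangle^{n-1},f(x_o))\big|$$ (i.e. $f$ is an orbital $c_r$-contraction at $x_o$). Then the orbit $\{f^i(x_o)\}_{i\in\mathbb{N}}$ is a Cauchy sequence (i.e. $f$ is a Cauchy function at $x_o$).
   Context: Notation: $\langle a\rangle^k$ denotes the $k$-tuple $(a,\dots,a)$ inserted into an argument list; $f^0(x_o)=x_o$, $f^{i+1}(x_o)=f(f^i(x_o))$. A partial $n$-Metric on $X$ is a function $P:X^n\to\mathbb{R}$ such that for all $x_1,\dots,x_n,a\in X$: (1) $P(\langle x_1\rangle^n)\le P(\langle x_1\rangle^{n-1},x_2)$; (2) $P$ is invariant under permutations of its arguments; (3) $P(\langle x_1\rangle^{n-1},x_2)=P(\langle x_1\rangle^n)$ and $P(\langle x_2\rangle^{n-1},x_1)=P(\langle x_2\rangle^n)$ iff $x_1=x_2$; (4) $P(x_1,\dots,x_n)\le P(x_1,\dots,x_{n-1},a)+P(\langle a\rangle^{n-1},x_n)-P(\langle a\rangle^n)$. A sequence $\{x_i\}$ is Cauchy if there is $r'\in\mathbb{R}$ (its central distance) such that for every $\epsilon>0$ there is $N$ with $|P(x_{i_1},\dots,x_{i_n})-r'|<\epsilon$ for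 all $i_1,\dots,i_n>N$. *)

theory Defs
  imports Complex_Main "HOL-Library.Multiset"
begin

text \<open>A point of X^n is represented as a list of length n with entries in X.
  The tuple (<x>^(n-1), y) is replicate (n-1) x @ [y]; <x>^n is replicate n x.\<close>

definition partial_n_metric :: "nat \<Rightarrow> 'a set \<Rightarrow> ('a list \<Rightarrow> real) \<Rightarrow> bool" where
  "partial_n_metric n X P \<longleftrightarrow>
     (\<forall>x1\<in>X. \<forall>x2\<in>X.
        P (replicate n x1) \<le> P (replicate (n - 1) x1 @ [x2])) \<and>
     (\<forall>xs ys. length xs = n \<and> set xs \<subseteq> X \<and> mset ys = mset xs \<longrightarrow> P xs = P ys) \<and>
     (\<forall>x1\<in>X. \<forall>x2\<in>X.
        (P (replicate (n - 1) x1 @ [x2]) = P (replicate n x1) \<and>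
         P (replicate (n - 1) x2 @ [x1]) = P (replicate n x2)) \<longleftrightarrow> x1 = x2) \<and>
     (\<forall>xs a. length xs = n \<and> set xs \<subseteq> X \<and> a \<in> X \<longrightarrow>
        P xs \<le> P (butlast xs @ [a]) + P (replicate (n - 1) a @ [last xs]) - P (replicate n a))"

definition pn_cauchy :: "nat \<Rightarrow> ('a list \<Rightarrow> real) \<Rightarrow> (nat \<Rightarrow> 'a) \<Rightarrow> bool" where
  "pn_cauchy n P s \<longleftrightarrow>
     (\<exists>r'::real. \<forall>\<epsilon>>0. \<exists>N::nat. \<forall>is::nat list.
        length is = n \<and> (\<forall>i\<in>set is. i > N) \<longrightarrow> \<bar>P (map s is) - r'\<bar> < \<epsilon>)"

end

theory Submission
  imports Defs
begin

text \<open>Write x_i for the orbit and K for |P(<x_0>^{n-1}, x_1)|.  Chaining the triangle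
  inequality through consecutive orbit points bounds P(<x_j>^{n-1}, x_k) for j < k by the
  geometric tail r + c^j K / (1 - c); the case k < j follows by moving the coordinates of the
  tuple to x_k one at a time.  As P(<x_i>^n) \<ge> r for i \<ge> 1, every excess
  P(<x_j>^{n-1}, x_k) - P(<x_j>^n) with j, k \<ge> N \<ge> 1 is O(c^N).  Moving the coordinates of an
  arbitrary n-tuple of orbit points beyond N one at a time to x_N shows that its value is
  within O(c^N) of P(<x_N>^n), which is within c^N K of r: the orbit is Cauchy with central
  distance r.\<close>

lemma partial_n_metric_diag_le:
  assumes "partial_n_metric n X P" "a \<in> X" "b \<in> X"
  shows "P (replicate n a) \<le> P (replicate (n - 1) a @ [b])"
  using assms unfolding partial_n_metric_def by blast

lemma partial_n_metric_perm:
  assumes "partial_n_metric n X P" "length xs = n" "set xs \<subseteq> X" "mset ys = mset xs"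
  shows "P ys = P xs"
  using assms unfolding partial_n_metric_def by metis

lemma partial_n_metric_triangle_last:
  assumes "partial_n_metric n X P" "length xs = n" "set xs \<subseteq> X" "a \<in> X"
  shows "P xs \<le> P (butlast xs @ [a]) + P (replicate (n - 1) a @ [last xs]) - P (replicate n a)"
  using assms unfolding partial_n_metric_def by blast

lemma replicate_pred_snoc: "n \<ge> 1 \<Longrightarrow> replicate (n - 1) a @ [a] = replicate n a"
  by (metis One_nat_def Suc_pred' less_eq_Suc_le replicate_Suc replicate_append_same)

lemma partial_n_metric_triangle:
  assumes "partial_n_metric n X P" "n \<ge> 1" "a \<in> X" "b \<in> X" "c \<in> X"
  shows "P (replicate (n - 1) a @ [c])
    \<le> P (replicate (n - 1) a @ [b]) + P (replicate (n - 1) b @ [c]) - P (replicate n b)"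
  using partial_n_metric_triangle_last[OF assms(1), of "replicate (n - 1) a @ [c]" b] assms
  by (auto simp: butlast_append set_replicate_conv_if)

lemma partial_n_metric_replace:
  assumes pm: "partial_n_metric n X P" and len: "length (ys @ z # zs) = n"
    and X: "set (ys @ z # zs) \<subseteq> X" "a \<in> X"
  shows "P (ys @ z # zs) \<le> P (ys @ a # zs) + (P (replicate (n - 1) a @ [z]) - P (replicate n a))"
proof -
  have "P (ys @ z # zs) = P (ys @ zs @ [z])"
    by (rule partial_n_metric_perm[OF pm]) (use len X in auto)
  also have "\<dots> \<le> P (ys @ zs @ [a]) + (P (replicate (n - 1) a @ [z]) - P (replicate n a))"
    using partial_n_metric_triangle_last[OF pm, of "ys @ zs @ [z]" a] len X
    by (simp add: butlast_append)
  also have "P (ys @ zs @ [a]) = P (ys @ a # zs)"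
    by (rule partial_n_metric_perm[OF pm]) (use len X in auto)
  finally show ?thesis .
qed

lemma partial_n_metric_replace_list:
  assumes pm: "partial_n_metric n X P"
  shows "length (ys @ zs) = n \<Longrightarrow> length ws = length zs \<Longrightarrow> set (ys @ zs) \<subseteq> X \<Longrightarrow> set ws \<subseteq> X \<Longrightarrow>
    P (ys @ zs) \<le> P (ys @ ws) + (\<Sum>(z, w)\<leftarrow>zip zs ws. P (replicate (n - 1) w @ [z]) - P (replicate n w))"
proof (induction zs arbitrary: ys ws)
  case Nil
  then show ?case by simp
next
  case (Cons z zs)
  then obtain w ws' where ws: "ws = w # ws'"
    by (cases ws) auto
  have "P (ys @ z # zs) \<le> P (ys @ w # zs) + (P (replicate (n - 1) w @ [z]) - P (replicate n w))"
    using partial_n_metric_replace[OF pm] Cons.prems ws by simp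
  moreover have "P ((ys @ [w]) @ zs) \<le> P ((ys @ [w]) @ ws')
      + (\<Sum>(z, w)\<leftarrow>zip zs ws'. P (replicate (n - 1) w @ [z]) - P (replicate n w))"
    using Cons.IH[of "ys @ [w]" ws'] Cons.prems ws by simp
  ultimately show ?case
    using ws by simp
qed

lemma partial_n_metric_le_diag_add:
  fixes B :: real
  assumes pm: "partial_n_metric n X P" and "length xs = n" "set xs \<subseteq> X" "a \<in> X"
    and B: "\<And>t. t \<in> set xs \<Longrightarrow> P (replicate (n - 1) a @ [t]) - P (replicate n a) \<le> B"
  shows "P xs \<le> P (replicate n a) + n * B"
proof -
  have "P xs \<le> P (replicate n a) + (\<Sum>t\<leftarrow>xs. P (replicate (n - 1) a @ [t]) - P (replicate n a))"
    using partial_n_metric_replace_list[OF pm, of "[]" xs "replicate n a"] assms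
    by (simp add: zip_replicate2 comp_def set_replicate_conv_if)
  also have "(\<Sum>t\<leftarrow>xs. P (replicate (n - 1) a @ [t]) - P (replicate n a)) \<le> (\<Sum>t\<leftarrow>xs. B)"
    using B by (rule sum_list_mono)
  finally show ?thesis
    using assms(2) by (simp add: sum_list_triv)
qed

lemma partial_n_metric_diag_le_add:
  fixes B :: real
  assumes pm: "partial_n_metric n X P" and "length xs = n" "set xs \<subseteq> X" "a \<in> X"
    and B: "\<And>t. t \<in> set xs \<Longrightarrow> P (replicate (n - 1) t @ [a]) - P (replicate n t) \<le> B"
  shows "P (replicate n a) \<le> P xs + n * B"
proof -
  have "P (replicate n a) \<le> P xs + (\<Sum>t\<leftarrow>xs. P (replicate (n - 1) t @ [a]) - P (replicate n t))"
    using partial_n_metric_replace_list[OF pm, of "[]" "replicate n a" xs] assms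
    by (simp add: zip_replicate1 comp_def set_replicate_conv_if)
  also have "(\<Sum>t\<leftarrow>xs. P (replicate (n - 1) t @ [a]) - P (replicate n t)) \<le> (\<Sum>t\<leftarrow>xs. B)"
    using B by (rule sum_list_mono)
  finally show ?thesis
    using assms(2) by (simp add: sum_list_triv)
qed

locale pn_geometric_sequence =
  fixes n :: nat and X :: "'a set" and P :: "'a list \<Rightarrow> real" and s :: "nat \<Rightarrow> 'a"
    and r c K :: real
  assumes partial_n_metric: "partial_n_metric n X P"
    and n_ge_1: "n \<ge> 1"
    and s_in: "s i \<in> X"
    and c_gt_0: "0 < c" and c_lt_1: "c < 1"
    and K_ge_0: "0 \<le> K"
    and r_le_diag_Suc: "r \<le> P (replicate n (s (Suc i)))"
    and step_le: "P (replicate (n - 1) (s i) @ [s (Suc i)]) \<le> r + c ^ i * K"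
begin

lemma diag_le: "P (replicate n (s i)) \<le> r + c ^ i * K"
  using partial_n_metric_diag_le[OF partial_n_metric s_in s_in, of i "Suc i"] step_le[of i]
  by linarith

lemma r_le_diag: "1 \<le> i \<Longrightarrow> r \<le> P (replicate n (s i))"
  using r_le_diag_Suc[of "i - 1"] by simp

lemma forward_le:
  assumes "j < k"
  shows "P (replicate (n - 1) (s j) @ [s k]) \<le> r + c ^ j * K / (1 - c)"
proof -
  obtain d where k: "k = j + Suc d"
    using less_imp_Suc_add[OF assms] by auto
  have "P (replicate (n - 1) (s j) @ [s (j + Suc d)]) \<le> r + c ^ j * K / (1 - c)"
  proof (induction d arbitrary: j)
    case 0
    have "c ^ j * K \<le> c ^ j * K / (1 - c)"
      using K_ge_0 c_gt_0 c_lt_1 by (simp add: field_simps mult_left_le)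
    then show ?case
      using step_le[of j] by simp
  next
    case (Suc d)
    let ?k = "j + Suc (Suc d)"
    have "P (replicate (n - 1) (s j) @ [s ?k])
        \<le> P (replicate (n - 1) (s j) @ [s (Suc j)]) + P (replicate (n - 1) (s (Suc j)) @ [s ?k])
          - P (replicate n (s (Suc j)))"
      by (rule partial_n_metric_triangle[OF partial_n_metric n_ge_1 s_in s_in s_in])
    also have "\<dots> \<le> (r + c ^ j * K) + (r + c ^ Suc j * K / (1 - c)) - r"
      using step_le[of j] Suc.IH[of "Suc j"] r_le_diag_Suc[of j] by simp
    also have "\<dots> = r + c ^ j * K / (1 - c)"
      using c_lt_1 by (simp add: field_simps)
    finally show ?case .
  qed
  then show ?thesis
    unfolding k .
qed

lemma forward_excess_le:
  "1 \<le> j \<Longrightarrow> j < k \<Longrightarrow>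
    P (replicate (n - 1) (s j) @ [s k]) - P (replicate n (s j)) \<le> c ^ j * K / (1 - c)"
  using forward_le[of j k] r_le_diag[of j] by linarith

lemma excess_self: "P (replicate (n - 1) (s i) @ [s i]) - P (replicate n (s i)) = 0"
  by (simp only: replicate_pred_snoc[OF n_ge_1] diff_self)

lemma backward_excess_le:
  assumes "1 \<le> k" "k < j"
  shows "P (replicate (n - 1) (s j) @ [s k]) - P (replicate n (s j)) \<le> c ^ k * (K + n * K / (1 - c))"
proof -
  have "P (replicate (n - 1) (s j) @ [s k]) \<le> P (replicate n (s k)) + n * (c ^ k * K / (1 - c))"
  proof (rule partial_n_metric_le_diag_add[OF partial_n_metric _ _ s_in])
    fix t assume "t \<in> set (replicate (n - 1) (s j) @ [s k])"
    then have "t = s j \<or> t = s k"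
      by (auto split: if_splits)
    moreover have "0 \<le> c ^ k * K / (1 - c)"
      using K_ge_0 c_gt_0 c_lt_1 by simp
    ultimately show "P (replicate (n - 1) (s k) @ [t]) - P (replicate n (s k)) \<le> c ^ k * K / (1 - c)"
      using forward_excess_le[OF assms] excess_self[of k] by auto
  qed (use n_ge_1 s_in in auto)
  then show ?thesis
    using diag_le[of k] r_le_diag[of j] assms by (simp add: algebra_simps)
qed

lemma excess_le:
  assumes "1 \<le> N" "N \<le> j" "N \<le> k"
  shows "P (replicate (n - 1) (s j) @ [s k]) - P (replicate n (s j)) \<le> c ^ N * (K + n * K / (1 - c))"
proof -
  have L_ge_0: "0 \<le> K + n * K / (1 - c)"
    using K_ge_0 c_lt_1 by simp
  have mono: "c ^ i * (K + n * K / (1 - c)) \<le> c ^ N * (K + n * K / (1 - c))" if "N \<le> i" for i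
    using that L_ge_0 c_gt_0 c_lt_1 by (intro mult_right_mono power_decreasing) auto
  consider "j < k" | "j = k" | "k < j"
    by linarith
  then show ?thesis
  proof cases
    case 1
    have "K / (1 - c) \<le> K + n * K / (1 - c)"
      using n_ge_1 K_ge_0 c_lt_1 mult_right_mono[of 1 "real n" "K / (1 - c)"] by simp
    then have "c ^ j * (K / (1 - c)) \<le> c ^ j * (K + n * K / (1 - c))"
      using c_gt_0 by (intro mult_left_mono) auto
    then show ?thesis
      using forward_excess_le[of j k] mono[of j] 1 assms by simp
  next
    case 2
    then show ?thesis
      using excess_self[of j] L_ge_0 c_gt_0 by simp
  next
    case 3
    then show ?thesis
      using backward_excess_le[of k j] mono[of k] assms by simp
  qed
qed

lemma tail_dist_le:
  assumes "1 \<le> N" "length is = n" "\<And>i. i \<in> set is \<Longrightarrow> N \<le> i"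
  shows "\<bar>P (map s is) - r\<bar> \<le> c ^ N * (K + n * (K + n * K / (1 - c)))"
proof -
  have "P (map s is) \<le> P (replicate n (s N)) + n * (c ^ N * (K + n * K / (1 - c)))"
    by (rule partial_n_metric_le_diag_add[OF partial_n_metric _ _ s_in])
      (use assms s_in excess_le in auto)
  moreover have "P (replicate n (s N)) \<le> P (map s is) + n * (c ^ N * (K + n * K / (1 - c)))"
    by (rule partial_n_metric_diag_le_add[OF partial_n_metric _ _ s_in])
      (use assms s_in excess_le in auto)
  ultimately show ?thesis
    using diag_le[of N] r_le_diag[OF assms(1)] by (simp add: abs_le_iff algebra_simps)
qed

theorem pn_cauchy: "pn_cauchy n P s"
  unfolding pn_cauchy_def
proof (rule exI[of _ r], intro allI impI)
  fix \<epsilon> :: real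
  assume "\<epsilon> > 0"
  define M where "M = K + n * (K + n * K / (1 - c))"
  have "(\<lambda>N. c ^ N * M) \<longlonglongrightarrow> 0"
    using c_gt_0 c_lt_1 by (intro tendsto_mult_left_zero LIMSEQ_power_zero) simp
  then have "eventually (\<lambda>m. c ^ m * M < \<epsilon>) sequentially"
    using \<open>\<epsilon> > 0\<close> by (rule order_tendstoD(2))
  then obtain N where N: "\<And>m. N \<le> m \<Longrightarrow> c ^ m * M < \<epsilon>"
    unfolding eventually_sequentially by blast
  show "\<exists>N. \<forall>is. length is = n \<and> (\<forall>i\<in>set is. N < i) \<longrightarrow> \<bar>P (map s is) - r\<bar> < \<epsilon>"
  proof (rule exI[of _ N], intro allI impI)
    fix "is" :: "nat list"
    assume "length is = n \<and> (\<forall>i\<in>set is. N < i)"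
    then have "\<bar>P (map s is) - r\<bar> \<le> c ^ Suc N * M"
      unfolding M_def by (intro tail_dist_le) auto
    also have "\<dots> < \<epsilon>"
      using N[of "Suc N"] by simp
    finally show "\<bar>P (map s is) - r\<bar> < \<epsilon>" .
  qed
qed

end

theorem lemma5p11:
  fixes n :: nat and X :: "'a set" and P :: "'a list \<Rightarrow> real"
    and f :: "'a \<Rightarrow> 'a" and xo :: 'a and r c :: real
  assumes "n \<ge> 2"
    and "partial_n_metric n X P"
    and "xo \<in> X"
    and "\<forall>x\<in>X. f x \<in> X"
    and "0 < c" and "c < 1"
    and "\<forall>i::nat. r \<le> P (replicate n ((f ^^ (i + 1)) xo))"
    and "\<forall>i::nat. P (replicate (n - 1) ((f ^^ i) xo) @ [(f ^^ (i + 1)) xo])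
                  \<le> r + c ^ i * \<bar>P (replicate (n - 1) xo @ [f xo])\<bar>"
  shows "pn_cauchy n P (\<lambda>i. (f ^^ i) xo)"
proof -
  have orbit_in: "(f ^^ i) xo \<in> X" for i
    by (induction i) (use assms(3,4) in auto)
  interpret pn_geometric_sequence n X P "\<lambda>i. (f ^^ i) xo" r c "\<bar>P (replicate (n - 1) xo @ [f xo])\<bar>"
    by unfold_locales (use assms orbit_in in auto)
  show ?thesis
    by (rule pn_cauchy)
qed

end
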